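(* Let $\mathbb S$ be the free semigroup action on the compact metric space $X$ generated by continuous maps $g_1,\dots,g_p$ with $p\ge2$. Then every point of $\Sigma_p^+\times X$ is an entropy point of $\mathcal F_G$, i.e. $E_p(\Sigma_p^+\times X,\mathcal F_G)=\Sigma_p^+\times X$.
   Context: $\Sigma_p^+=\{1,\dots,p\}^{\mathbb N}$ with metric $D(\omega,\omega')=p^{-\min\{n:\omega_n\ne\omega'_n\}}$ and shift $\sigma$; $\mathcal F_G(\omega,x)=(\sigma\omega,g_{\omega_1}(x))$ on $\Sigma_p^+\times X$ with metric $\max(D,d)$. For $Z\subset\Sigma_p^+\times X$, $h_{top}(Z,\mathcal F_G)=\lim_{\varepsilon\to0}\limsup_n\frac1n\log s_n(Z,\varepsilon)$, with $s_n(Z,\varepsilon)$ the maximal cardinality of an $(n,\varepsilon)$-separated subset of $Z$ for $\mathcal F_G$. A point $z$ is an entropy point of $\mathcal F_G$ if $h_{top}(F,\mathcal F_G)>0$ for every closed neighbourhood $F$ of $z$; $E_p(\Sigma_p^+\times X,\mathcal F_G)$ is the set of such points. *)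

theory Defs
  imports "HOL-Analysis.Analysis"
begin

text \<open>A sequence \<omega> = (\<omega>_1, \<omega>_2, ...) is represented
  as a function nat => nat with \<omega> 0 = \<omega>_1, \<omega> 1 = \<omega>_2, etc. (0-based storage).\<close>

definition Sigma_p :: "nat \<Rightarrow> (nat \<Rightarrow> nat) set" where
  "Sigma_p p = {\<omega>. \<forall>n. \<omega> n \<in> {1..p}}"

text \<open>D(\<omega>,\<omega>') = p^(-min{n : \<omega>_n \<noteq> \<omega>'_n}) with 1-based n; with 0-based storage the
  first differing paper index is (LEAST k. \<omega> k \<noteq> \<omega>' k) + 1.\<close>
definition shift_dist :: "nat \<Rightarrow> (nat \<Rightarrow> nat) \<Rightarrow> (nat \<Rightarrow> nat) \<Rightarrow> real" where
  "shift_dist p \<omega> \<omega>' =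
     (if \<omega> = \<omega>' then 0 else real p powr (- (real (LEAST k. \<omega> k \<noteq> \<omega>' k) + 1)))"

definition shift :: "(nat \<Rightarrow> nat) \<Rightarrow> (nat \<Rightarrow> nat)" where
  "shift \<omega> = (\<lambda>n. \<omega> (Suc n))"

definition skew :: "(nat \<Rightarrow> 'a \<Rightarrow> 'a) \<Rightarrow> (nat \<Rightarrow> nat) \<times> 'a \<Rightarrow> (nat \<Rightarrow> nat) \<times> 'a" where
  "skew g z = (shift (fst z), g (fst z 0) (snd z))"

definition prod_dist :: "nat \<Rightarrow> (nat \<Rightarrow> nat) \<times> 'a::metric_space \<Rightarrow> (nat \<Rightarrow> nat) \<times> 'a \<Rightarrow> real" where
  "prod_dist p z w = max (shift_dist p (fst z) (fst w)) (dist (snd z) (snd w))"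

definition separated :: "('b \<Rightarrow> 'b \<Rightarrow> real) \<Rightarrow> ('b \<Rightarrow> 'b) \<Rightarrow> nat \<Rightarrow> real \<Rightarrow> 'b set \<Rightarrow> bool" where
  "separated d T n \<epsilon> E =
     (\<forall>x\<in>E. \<forall>y\<in>E. x \<noteq> y \<longrightarrow> (\<exists>k<n. d ((T ^^ k) x) ((T ^^ k) y) > \<epsilon>))"

text \<open>s_n(Z,\<epsilon>): maximal cardinality of an (n,\<epsilon>)-separated subset of Z (as an extended real,
  so that it is well defined even if unbounded).\<close>
definition sep_num :: "('b \<Rightarrow> 'b \<Rightarrow> real) \<Rightarrow> ('b \<Rightarrow> 'b) \<Rightarrow> 'b set \<Rightarrow> nat \<Rightarrow> real \<Rightarrow> ereal" where
  "sep_num d T Z n \<epsilon> =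
     Sup {ereal (real (card E)) | E. finite E \<and> E \<subseteq> Z \<and> separated d T n \<epsilon> E}"

definition ln_ereal :: "ereal \<Rightarrow> ereal" where
  "ln_ereal x = (if x = \<infinity> then \<infinity> else if x \<le> 0 then -\<infinity> else ereal (ln (real_of_ereal x)))"

definition htop :: "('b \<Rightarrow> 'b \<Rightarrow> real) \<Rightarrow> ('b \<Rightarrow> 'b) \<Rightarrow> 'b set \<Rightarrow> ereal" where
  "htop d T Z =
     Lim (at_right 0) (\<lambda>\<epsilon>. limsup (\<lambda>n. ln_ereal (sep_num d T Z n \<epsilon>) / ereal (real n)))"

definition entropy_points :: "'b set \<Rightarrow> ('b \<Rightarrow> 'b \<Rightarrow> real) \<Rightarrow> ('b \<Rightarrow> 'b) \<Rightarrow> 'b set" where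
  "entropy_points S d T =
     {z \<in> S. \<forall>F. closedin (Metric_space.mtopology S d) F \<and>
                 (\<exists>U. openin (Metric_space.mtopology S d) U \<and> z \<in> U \<and> U \<subseteq> F)
                 \<longrightarrow> htop d T F > 0}"

end

theory Submission
  imports Defs
begin

text \<open>The entropy already comes from the shift coordinate. Every neighbourhood of (\<omega>, x)
  contains the cylinder of sequences agreeing with \<omega> up to some N, times {x}. Choosing the
  symbols at positions N, ..., n-1 freely yields p^(n-N) points whose orbits are
  (n, \<epsilon>)-separated for every \<epsilon> < 1/p, since two of them differ in their current symbol at
  some time k < n. Hence every neighbourhood has entropy at least log p > 0.\<close>

lemma tendsto_SUP_at_right_0_antimono:
  fixes f :: "real \<Rightarrow> 'b::{complete_linorder, linorder_topology}"
  assumes antimono: "\<And>a b. 0 < a \<Longrightarrow> a \<le> b \<Longrightarrow> f b \<le> f a"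
  shows "(f \<longlongrightarrow> (SUP e\<in>{0<..}. f e)) (at_right 0)"
proof (rule order_tendstoI)
  fix y assume "y < (SUP e\<in>{0<..}. f e)"
  then obtain e where "0 < e" "y < f e" by (auto simp: less_SUP_iff)
  then show "\<forall>\<^sub>F a in at_right 0. y < f a"
    unfolding eventually_at_right_field using antimono
    by (intro exI[of _ e]) (auto intro: less_le_trans)
next
  fix y assume "(SUP e\<in>{0<..}. f e) < y"
  moreover have "f a \<le> (SUP e\<in>{0<..}. f e)" if "0 < a" for a
    using that by (auto intro: SUP_upper)
  ultimately show "\<forall>\<^sub>F a in at_right 0. f a < y"
    unfolding eventually_at_right_field by (auto intro!: exI[of _ 1] intro: le_less_trans)
qed

lemma sep_num_antimono:
  assumes "\<epsilon>1 \<le> \<epsilon>2"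
  shows "sep_num d T Z n \<epsilon>2 \<le> sep_num d T Z n \<epsilon>1"
proof -
  have "separated d T n \<epsilon>1 E" if "separated d T n \<epsilon>2 E" for E
    using that assms unfolding separated_def by (meson le_less_trans)
  then show ?thesis
    unfolding sep_num_def by (intro Sup_subset_mono) blast
qed

lemma sep_num_ge_card:
  assumes "finite E" "E \<subseteq> Z" "separated d T n \<epsilon> E"
  shows "ereal (real (card E)) \<le> sep_num d T Z n \<epsilon>"
  unfolding sep_num_def using assms by (intro Sup_upper) blast

lemma ln_ereal_mono: "x \<le> y \<Longrightarrow> ln_ereal x \<le> ln_ereal y"
  by (cases x; cases y) (auto simp: ln_ereal_def)

lemma limsup_growth_le_htop:
  assumes "0 < \<epsilon>"
  shows "limsup (\<lambda>n. ln_ereal (sep_num d T Z n \<epsilon>) / ereal (real n)) \<le> htop d T Z"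
proof -
  define L where "L \<epsilon>' = limsup (\<lambda>n. ln_ereal (sep_num d T Z n \<epsilon>') / ereal (real n))" for \<epsilon>'
  have "L b \<le> L a" if "a \<le> b" for a b
    unfolding L_def
    by (intro Limsup_mono eventually_sequentiallyI[of 1] ereal_divide_right_mono ln_ereal_mono
        sep_num_antimono that) simp
  \<comment> \<open>htop is a Lim, meaningless unless the limit exists; antitonicity provides it.\<close>
  then have "(L \<longlongrightarrow> (SUP e\<in>{0<..}. L e)) (at_right 0)"
    by (intro tendsto_SUP_at_right_0_antimono)
  then have "htop d T Z = (SUP e\<in>{0<..}. L e)"
    unfolding htop_def L_def[abs_def] by (intro tendsto_Lim) simp_all
  then show ?thesis
    using assms unfolding L_def by (auto intro: SUP_upper)
qed

lemma limsup_ln_div_pos: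
  fixes s :: "nat \<Rightarrow> ereal" and c :: real
  assumes "1 < c" and growth: "\<And>n. ereal (c ^ (n - N)) \<le> s n"
  shows "0 < limsup (\<lambda>n. ln_ereal (s n) / ereal (real n))"
proof -
  have "ereal (ln c / 2) \<le> ln_ereal (s n) / ereal (real n)" if n: "2 * N + 1 \<le> n" for n
  proof -
    have "ereal (ln c / 2) \<le> ereal (real (n - N) * ln c / real n)"
      using n \<open>1 < c\<close> by (simp add: field_simps)
    also have "\<dots> = ln_ereal (ereal (c ^ (n - N))) / ereal (real n)"
      using n \<open>1 < c\<close> by (simp add: ln_ereal_def ln_realpow not_le ereal_divide)
    also have "\<dots> \<le> ln_ereal (s n) / ereal (real n)"
      using n by (intro ereal_divide_right_mono ln_ereal_mono growth) simp
    finally show ?thesis .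
  qed
  then have "limsup (\<lambda>n. ereal (ln c / 2)) \<le> limsup (\<lambda>n. ln_ereal (s n) / ereal (real n))"
    by (intro Limsup_mono) (auto simp: eventually_sequentially)
  then have "ereal (ln c / 2) \<le> limsup (\<lambda>n. ln_ereal (s n) / ereal (real n))"
    by (simp add: Limsup_const)
  moreover have "0 < ereal (ln c / 2)" using \<open>1 < c\<close> by simp
  ultimately show ?thesis by (rule less_le_trans[rotated])
qed

lemma shift_dist_nonneg: "0 \<le> shift_dist p a b"
  unfolding shift_dist_def by simp

lemma shift_dist_self [simp]: "shift_dist p a a = 0"
  unfolding shift_dist_def by simp

lemma shift_dist_commute: "shift_dist p a b = shift_dist p b a"
  unfolding shift_dist_def by (simp add: eq_commute)

lemma shift_dist_eq_0_iff: "1 \<le> p \<Longrightarrow> shift_dist p a b = 0 \<longleftrightarrow> a = b"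
  unfolding shift_dist_def by simp

lemma shift_dist_first_differ:
  assumes "a 0 \<noteq> b 0"
  shows "shift_dist p a b = 1 / real p"
proof -
  have "(LEAST k. a k \<noteq> b k) = 0" using assms by (simp add: Least_eq_0)
  moreover have "a \<noteq> b" using assms by auto
  ultimately show ?thesis by (simp add: shift_dist_def powr_minus divide_inverse)
qed

lemma shift_dist_le_if_agree:
  assumes "1 \<le> p" and agree: "\<forall>k<N. a k = b k"
  shows "shift_dist p a b \<le> real p powr - (real N + 1)"
proof (cases "a = b")
  case False
  then obtain j where "a j \<noteq> b j" by auto
  then have "a (LEAST k. a k \<noteq> b k) \<noteq> b (LEAST k. a k \<noteq> b k)" by (rule LeastI)
  then have "N \<le> (LEAST k. a k \<noteq> b k)" using agree by (meson not_le)
  then show ?thesis using False assms(1) by (simp add: shift_dist_def powr_mono)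
qed (simp add: shift_dist_def)

lemma Least_neq_ge_min:
  fixes a b c :: "nat \<Rightarrow> 'b"
  assumes "a \<noteq> c"
  shows "min (LEAST k. a k \<noteq> b k) (LEAST k. b k \<noteq> c k) \<le> (LEAST k. a k \<noteq> c k)"
proof (rule ccontr)
  let ?k = "LEAST k. a k \<noteq> c k"
  assume "\<not> ?thesis"
  then have "?k < (LEAST k. a k \<noteq> b k)" "?k < (LEAST k. b k \<noteq> c k)" by auto
  then have "a ?k = b ?k" "b ?k = c ?k" using not_less_Least by blast+
  moreover obtain j where "a j \<noteq> c j" using assms by auto
  then have "a ?k \<noteq> c ?k" by (rule LeastI)
  ultimately show False by simp
qed

lemma shift_dist_ultrametric:
  assumes "1 \<le> p"
  shows "shift_dist p a c \<le> max (shift_dist p a b) (shift_dist p b c)"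
proof -
  consider "a = c" | "a = b" | "b = c" | "a \<noteq> b" "b \<noteq> c" "a \<noteq> c" by blast
  then show ?thesis
  proof cases
    case 4
    define i j k where "i = (LEAST k. a k \<noteq> b k)" and "j = (LEAST k. b k \<noteq> c k)"
      and "k = (LEAST k. a k \<noteq> c k)"
    have "min i j \<le> k" unfolding i_def j_def k_def using 4 by (intro Least_neq_ge_min)
    then have "real p powr - (real k + 1) \<le> real p powr - (real (min i j) + 1)"
      using assms by (intro powr_mono) auto
    then show ?thesis
      using 4 by (cases "i \<le> j") (simp_all add: shift_dist_def min_def flip: i_def j_def k_def)
  qed (auto simp: le_max_iff_disj shift_dist_nonneg)
qed

lemma Metric_space_prod_dist:
  assumes "1 \<le> p"
  shows "Metric_space (S \<times> X) (prod_dist p)"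
proof
  fix z w u :: "(nat \<Rightarrow> nat) \<times> 'a"
  show "0 \<le> prod_dist p z w"
    unfolding prod_dist_def by (simp add: le_max_iff_disj shift_dist_nonneg)
  show "prod_dist p z w = prod_dist p w z"
    unfolding prod_dist_def by (simp add: shift_dist_commute dist_commute)
  have "prod_dist p z w = 0 \<longleftrightarrow> shift_dist p (fst z) (fst w) = 0 \<and> dist (snd z) (snd w) = 0"
    unfolding prod_dist_def
    using shift_dist_nonneg[of p "fst z" "fst w"] zero_le_dist[of "snd z" "snd w"]
    by (auto simp: max_def)
  then show "prod_dist p z w = 0 \<longleftrightarrow> z = w"
    by (simp add: shift_dist_eq_0_iff[OF assms] prod_eq_iff)
  have "shift_dist p (fst z) (fst u) \<le> shift_dist p (fst z) (fst w) + shift_dist p (fst w) (fst u)"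
    using shift_dist_ultrametric[OF assms, of "fst z" "fst u" "fst w"]
      shift_dist_nonneg[of p "fst z" "fst w"] shift_dist_nonneg[of p "fst w" "fst u"] by linarith
  moreover have "dist (snd z) (snd u) \<le> dist (snd z) (snd w) + dist (snd w) (snd u)"
    by (rule dist_triangle)
  ultimately show "prod_dist p z u \<le> prod_dist p z w + prod_dist p w u"
    unfolding prod_dist_def by (smt (verit) max.cobounded1 max.cobounded2 max_def)
qed

definition cylinder :: "nat \<Rightarrow> (nat \<Rightarrow> nat) \<Rightarrow> nat \<Rightarrow> (nat \<Rightarrow> nat) set" where
  "cylinder p \<omega> N = {\<omega>' \<in> Sigma_p p. \<forall>k<N. \<omega>' k = \<omega> k}"

lemma cylinder_times_subset_mball:
  assumes "1 \<le> p" "\<omega> \<in> Sigma_p p" "x \<in> X" "real p powr - (real N + 1) < r"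
  shows "cylinder p \<omega> N \<times> {x} \<subseteq> Metric_space.mball (Sigma_p p \<times> X) (prod_dist p) (\<omega>, x) r"
proof
  fix z assume "z \<in> cylinder p \<omega> N \<times> {x}"
  then obtain \<omega>' where z: "z = (\<omega>', x)" "\<omega>' \<in> Sigma_p p" "\<forall>k<N. \<omega> k = \<omega>' k"
    by (auto simp: cylinder_def)
  have "shift_dist p \<omega> \<omega>' < r"
    using shift_dist_le_if_agree[OF assms(1) z(3)] assms(4) by linarith
  then show "z \<in> Metric_space.mball (Sigma_p p \<times> X) (prod_dist p) (\<omega>, x) r"
    using z assms(2,3) shift_dist_nonneg[of p \<omega> \<omega>']
    unfolding Metric_space.in_mball[OF Metric_space_prod_dist[OF assms(1)]]
    by (simp add: prod_dist_def)
qed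

lemma fst_skew_iter: "fst ((skew g ^^ k) z) = (\<lambda>j. fst z (j + k))"
  by (induction k) (auto simp: skew_def shift_def)

lemma prod_dist_skew_iter_gt:
  assumes "fst z k \<noteq> fst w k" "\<epsilon> < 1 / real p"
  shows "\<epsilon> < prod_dist p ((skew g ^^ k) z) ((skew g ^^ k) w)"
proof -
  have "shift_dist p (fst ((skew g ^^ k) z)) (fst ((skew g ^^ k) w)) = 1 / real p"
    using assms(1) by (intro shift_dist_first_differ) (simp add: fst_skew_iter)
  then show ?thesis using assms(2) unfolding prod_dist_def by linarith
qed

lemma sep_num_cylinder_ge:
  assumes "\<omega> \<in> Sigma_p p" "\<epsilon> < 1 / real p" "cylinder p \<omega> N \<times> {x} \<subseteq> F"
  shows "ereal (real p ^ (n - N)) \<le> sep_num (prod_dist p) (skew g) F n \<epsilon>"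
proof -
  define splice where "splice f k = (if N \<le> k \<and> k < n then f k else \<omega> k)"
    for f :: "nat \<Rightarrow> nat" and k
  define P where "P = PiE {N..<n} (\<lambda>_. {1..p})"
  define E where "E = (\<lambda>\<omega>'. (\<omega>', x)) ` splice ` P"
  have "inj_on splice P"
  proof
    fix f f' assume "f \<in> P" "f' \<in> P" "splice f = splice f'"
    then show "f = f'"
      unfolding P_def splice_def by (intro PiE_ext) (auto simp: fun_eq_iff, metis)
  qed
  then have "card E = p ^ (n - N)"
    unfolding E_def by (simp add: card_image inj_on_def card_PiE P_def)
  moreover have "splice ` P \<subseteq> cylinder p \<omega> N"
    using assms(1) by (auto simp: P_def splice_def cylinder_def Sigma_p_def PiE_iff)
  then have "E \<subseteq> F" using assms(3) unfolding E_def by blast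
  moreover have "separated (prod_dist p) (skew g) n \<epsilon> E"
    unfolding separated_def
  proof (intro ballI impI)
    fix z w assume "z \<in> E" "w \<in> E" "z \<noteq> w"
    then obtain f f' where zw: "z = (splice f, x)" "w = (splice f', x)" "splice f \<noteq> splice f'"
      unfolding E_def by blast
    then obtain k where "splice f k \<noteq> splice f' k" by blast
    moreover from this have "k < n" by (auto simp: splice_def split: if_splits)
    ultimately have "fst z k \<noteq> fst w k" "k < n" using zw by simp_all
    then show "\<exists>k<n. \<epsilon> < prod_dist p ((skew g ^^ k) z) ((skew g ^^ k) w)"
      using prod_dist_skew_iter_gt[OF _ assms(2)] by blast
  qed
  moreover have "finite E" unfolding E_def P_def by (intro finite_imageI finite_PiE) auto
  ultimately show ?thesis using sep_num_ge_card by fastforce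
qed

theorem mainTheorem6:
  fixes X :: "'a::metric_space set" and g :: "nat \<Rightarrow> 'a \<Rightarrow> 'a" and p :: nat
  assumes "compact X"
    and "p \<ge> 2"
    and "\<And>i. i \<in> {1..p} \<Longrightarrow> continuous_on X (g i)"
    and "\<And>i. i \<in> {1..p} \<Longrightarrow> g i ` X \<subseteq> X"
  shows "entropy_points (Sigma_p p \<times> X) (prod_dist p) (skew g) = Sigma_p p \<times> X"
proof (intro equalityI subsetI)
  fix z assume "z \<in> entropy_points (Sigma_p p \<times> X) (prod_dist p) (skew g)"
  then show "z \<in> Sigma_p p \<times> X" by (simp add: entropy_points_def)
next
  fix z assume z: "z \<in> Sigma_p p \<times> X"
  then obtain \<omega> x where z_eq: "z = (\<omega>, x)" and \<omega>: "\<omega> \<in> Sigma_p p" and x: "x \<in> X" by blast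
  have p: "1 < real p" "1 \<le> p" using assms(2) by simp_all
  note metric = Metric_space_prod_dist[OF p(2), of "Sigma_p p" X]
  have "0 < htop (prod_dist p) (skew g) F"
    if U: "openin (Metric_space.mtopology (Sigma_p p \<times> X) (prod_dist p)) U" "z \<in> U" "U \<subseteq> F" for U F
  proof -
    obtain r where r: "0 < r" "Metric_space.mball (Sigma_p p \<times> X) (prod_dist p) z r \<subseteq> U"
      using U(1,2) Metric_space.openin_mtopology[OF metric] by blast
    obtain N :: nat where "- log (real p) r - 1 < real N" using reals_Archimedean2 by blast
    then have "- (real N + 1) < log (real p) r" by linarith
    then have "real p powr - (real N + 1) < r" using less_log_iff[OF p(1) r(1)] by blast
    then have "cylinder p \<omega> N \<times> {x} \<subseteq> F"
      using cylinder_times_subset_mball[OF p(2) \<omega> x] r(2) U(3) z_eq by blast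
    then have "ereal (real p ^ (n - N)) \<le> sep_num (prod_dist p) (skew g) F n (1 / (2 * real p))" for n
      using p by (intro sep_num_cylinder_ge[OF \<omega>]) (simp_all add: field_simps)
    then have "0 < limsup (\<lambda>n. ln_ereal (sep_num (prod_dist p) (skew g) F n (1 / (2 * real p)))
        / ereal (real n))"
      by (rule limsup_ln_div_pos[OF p(1)])
    also have "\<dots> \<le> htop (prod_dist p) (skew g) F"
      using p by (intro limsup_growth_le_htop) simp
    finally show ?thesis .
  qed
  then show "z \<in> entropy_points (Sigma_p p \<times> X) (prod_dist p) (skew g)"
    unfolding entropy_points_def using z by blast
qed

end
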